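(* For $i=1,\dots,k$, let $\mathcal{E}_i$ be Euclidean spaces and $h_i\colon \mathcal{E}_i\to\mathbb{R}^{m_i}$ be $C^\infty$ functions such that each $h_i$ satisfies assumptions (A1), (A2), (A3) (stated in the context) with constants $R_i$, $\underline{\sigma}_i$ and $C_{h_i}$ respectively. Let $\mathcal{E}=\mathcal{E}_1\times\cdots\times\mathcal{E}_k$, $m=m_1+\cdots+m_k$, and define $h\colon\mathcal{E}\to\mathbb{R}^m$ by $h(x_1,\dots,x_k)=(h_1(x_1),\dots,h_k(x_k))^\top$. Then $h$ satisfies (A1), (A2) and (A3) with constants $R=\min(R_1,\dots,R_k)$, $\underline{\sigma}=\min(\underline{\sigma}_1,\dots,\underline{\sigma}_k)$ and $C_h=\max(C_{h_1},\dots,C_{h_k})$.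
   Context: For a $C^\infty$ map $h\colon\mathcal{E}\to\mathbb{R}^m$ on a Euclidean space $\mathcal{E}$ (norm $\|\cdot\|$; on $\mathbb{R}^m$ the 2-norm), write $\mathrm{D}h(x)$ for its differential and $\sigma_{\min}(A)=\sigma_m(A)$ for the $m$-th (smallest) singular value of a linear map $A\colon\mathcal{E}\to\mathbb{R}^m$. (A1) with constants $R,\underline{\sigma}>0$: for all $x$ in $\mathcal{C}=\{x\in\mathcal{E}:\|h(x)\|\le R\}$ one has $\sigma_{\min}(\mathrm{D}h(x))\ge\underline{\sigma}$. (A2): the sets $\mathcal{M}=\{x\in\mathcal{E}:h(x)=0\}$ and $\mathcal{C}=\{x:\|h(x)\|\le R\}$ are compact. (A3) with constant $C_h>0$: for all $x\in\mathcal{C}$ and $v\in\mathcal{E}$, $h(x+v)=h(x)+\mathrm{D}h(x)[v]+E(x,v)$ with $\|E(x,v)\|\le C_h\|v\|^2$. *)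

theory Defs
  imports "HOL-Analysis.Analysis"
begin

text \<open>A Euclidean space E is modelled as a linear subspace S of an ambient type
  of class euclidean_space (with the inherited inner product); the target
  R^m (2-norm) likewise as a linear subspace T.\<close>

fun ddir :: "'a::real_normed_vector set \<Rightarrow> ('a \<Rightarrow> 'b::real_normed_vector) \<Rightarrow> 'a list \<Rightarrow> 'a \<Rightarrow> 'b" where
  "ddir S f [] = f"
| "ddir S f (v # vs) = (\<lambda>x. frechet_derivative (ddir S f vs) (at x within S) v)"

definition smooth_on :: "'a::real_normed_vector set \<Rightarrow> ('a \<Rightarrow> 'b::real_normed_vector) \<Rightarrow> bool" where
  "smooth_on S f \<longleftrightarrow> (\<forall>vs. set vs \<subseteq> S \<longrightarrow>
      continuous_on S (ddir S f vs) \<and> (\<forall>x\<in>S. ddir S f vs differentiable (at x within S)))"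

text \<open>Smallest (m-th) singular value of a linear map A : S \<rightarrow> T with dim T = m,
  via sigma_m(A) = min over unit u in T of the norm of the adjoint A* u,
  the latter being sup over v in S with norm v \<le> 1 of |u \<bullet> A v|.\<close>
definition sigma_min :: "'a::real_inner set \<Rightarrow> 'b::real_inner set \<Rightarrow> ('a \<Rightarrow> 'b) \<Rightarrow> real" where
  "sigma_min S T A = Inf {Sup {\<bar>u \<bullet> A v\<bar> | v. v \<in> S \<and> norm v \<le> 1} | u. u \<in> T \<and> norm u = 1}"

definition Dh :: "'a::real_normed_vector set \<Rightarrow> ('a \<Rightarrow> 'b::real_normed_vector) \<Rightarrow> 'a \<Rightarrow> 'a \<Rightarrow> 'b" where
  "Dh S h x = frechet_derivative h (at x within S)"

definition A1 :: "'a::real_inner set \<Rightarrow> 'b::real_inner set \<Rightarrow> ('a \<Rightarrow> 'b) \<Rightarrow> real \<Rightarrow> real \<Rightarrow> bool" where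
  "A1 S T h R \<sigma> \<longleftrightarrow> R > 0 \<and> \<sigma> > 0 \<and>
     (\<forall>x\<in>S. norm (h x) \<le> R \<longrightarrow> sigma_min S T (Dh S h x) \<ge> \<sigma>)"

definition A2 :: "'a::real_normed_vector set \<Rightarrow> ('a \<Rightarrow> 'b::real_normed_vector) \<Rightarrow> real \<Rightarrow> bool" where
  "A2 S h R \<longleftrightarrow> compact {x \<in> S. h x = 0} \<and> compact {x \<in> S. norm (h x) \<le> R}"

definition A3 :: "'a::real_normed_vector set \<Rightarrow> ('a \<Rightarrow> 'b::real_normed_vector) \<Rightarrow> real \<Rightarrow> real \<Rightarrow> bool" where
  "A3 S h R C \<longleftrightarrow> C > 0 \<and>
     (\<forall>x\<in>S. norm (h x) \<le> R \<longrightarrow> (\<forall>v\<in>S.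
        norm (h (x + v) - h x - Dh S h x v) \<le> C * (norm v)\<^sup>2))"

end

theory Submission
  imports Defs
begin

text \<open>Everything decouples blockwise. Since \<open>\<parallel>h x\<parallel> \<le> min R\<^sub>i\<close> forces
  \<open>\<parallel>h\<^sub>i x\<^sub>i\<parallel> \<le> R\<^sub>i\<close>, the hypotheses on every \<open>h\<^sub>i\<close> are available on the
  sublevel set of \<open>h\<close>. The differential of \<open>h\<close> is block diagonal, so the Taylor
  remainder of \<open>h\<close> is the vector of the blockwise remainders, of norm at most
  \<open>\<Sum> C\<^sub>i \<parallel>v\<^sub>i\<parallel>\<^sup>2 \<le> (max C\<^sub>i) \<parallel>v\<parallel>\<^sup>2\<close>. For a unit vector \<open>u = (u\<^sub>i)\<close>, testing
  the adjoint against \<open>v = (\<parallel>u\<^sub>i\<parallel> w\<^sub>i)\<close>, where \<open>w\<^sub>i\<close> is an almost optimal test vector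
  for \<open>u\<^sub>i / \<parallel>u\<^sub>i\<parallel>\<close>, gives \<open>\<parallel>Dh(x)\<^sup>* u\<parallel> \<ge> \<Sum> \<parallel>u\<^sub>i\<parallel>\<^sup>2 \<sigma>\<^sub>i \<ge> min \<sigma>\<^sub>i\<close>.
  Finally the zero set and the sublevel set of \<open>h\<close> are closed and lie in the product
  of the compact blockwise sets.\<close>

lemma vec_lambda_eq_sum_axis: "(\<chi> i. f i) = (\<Sum>j\<in>UNIV. axis j (f j))"
  by (simp add: vec_eq_iff axis_def if_distrib cong: if_cong)

lemma norm_axis: "norm (axis j x :: 'a::real_inner ^ 'k::finite) = norm x"
  by (simp add: norm_eq_sqrt_inner inner_axis_axis)

lemma bounded_linear_axis: "bounded_linear (axis j :: 'a::real_inner \<Rightarrow> 'a ^ 'k::finite)"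
  by (rule bounded_linear_intro[where K=1]) (auto simp: vec_eq_iff axis_def norm_axis[unfolded axis_def])

lemma has_derivative_vec_lambda:
  fixes g :: "'k::finite \<Rightarrow> 'a::real_normed_vector \<Rightarrow> 'b::real_inner"
  assumes "\<And>i. (g i has_derivative g' i) F"
  shows "((\<lambda>x. \<chi> i. g i x) has_derivative (\<lambda>v. \<chi> i. g' i v)) F"
proof -
  have "((\<lambda>x. \<Sum>j\<in>UNIV. axis j (g j x)) has_derivative (\<lambda>v. \<Sum>j\<in>UNIV. axis j (g' j v))) F"
    by (intro has_derivative_sum bounded_linear.has_derivative[OF bounded_linear_axis] assms)
  then show ?thesis by (simp add: vec_lambda_eq_sum_axis)
qed

lemma norm_vec_power2: "(norm (x :: 'a::real_normed_vector ^ 'k::finite))\<^sup>2 = (\<Sum>i\<in>UNIV. (norm (x $ i))\<^sup>2)"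
  unfolding norm_vec_def L2_set_def by (simp add: sum_nonneg)

lemma norm_vec_le_sum: "norm (x :: 'a::real_normed_vector ^ 'k::finite) \<le> (\<Sum>i\<in>UNIV. norm (x $ i))"
  unfolding norm_vec_def by (rule L2_set_le_sum) simp

lemma norm_vec_le_quadratic:
  fixes y :: "'a::real_normed_vector ^ 'k::finite" and v :: "'b::real_normed_vector ^ 'k"
  assumes "\<And>i. norm (y $ i) \<le> C * (norm (v $ i))\<^sup>2"
  shows "norm y \<le> C * (norm v)\<^sup>2"
proof -
  have "norm y \<le> (\<Sum>i\<in>UNIV. norm (y $ i))"
    by (rule norm_vec_le_sum)
  also have "\<dots> \<le> (\<Sum>i\<in>UNIV. C * (norm (v $ i))\<^sup>2)"
    using assms by (rule sum_mono)
  also have "\<dots> = C * (norm v)\<^sup>2"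
    by (simp add: norm_vec_power2 sum_distrib_left)
  finally show ?thesis .
qed

lemma bounded_vector_box:
  assumes "\<And>i. bounded (K i)"
  shows "bounded {x :: 'a::real_normed_vector ^ 'k::finite. \<forall>i. x $ i \<in> K i}"
proof -
  obtain B where B: "\<And>i y. y \<in> K i \<Longrightarrow> norm y \<le> B i"
    using assms unfolding bounded_iff by metis
  have "norm x \<le> (\<Sum>i\<in>UNIV. B i)" if "\<forall>i. x $ i \<in> K i" for x :: "'a ^ 'k"
    using norm_vec_le_sum[of x] sum_mono[of UNIV "\<lambda>i. norm (x $ i)" B] B that
    by fastforce
  then show ?thesis unfolding bounded_iff by blast
qed

lemma compact_subset_vector_box:
  fixes X :: "('a::euclidean_space ^ 'k::finite) set"
  assumes "closed X" and "X \<subseteq> {x. \<forall>i. x $ i \<in> K i}" and "\<And>i. compact (K i)"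
  shows "compact X"
  using bounded_subset[OF bounded_vector_box[OF compact_imp_bounded[OF assms(3)]] assms(2)] assms(1)
  by (simp add: compact_eq_bounded_closed)

lemma has_derivative_within_subspace_unique:
  assumes "subspace S" and "x \<in> S" and "v \<in> S"
    and "(f has_derivative D1) (at x within S)"
    and "(f has_derivative D2) (at x within S)"
  shows "D1 v = D2 v"
proof -
  define g where "g = (\<lambda>t::real. x + t *\<^sub>R v)"
  have g: "(g has_derivative (\<lambda>t. t *\<^sub>R v)) (at 0)"
    unfolding g_def by (auto intro!: derivative_eq_intros)
  have "range g \<subseteq> S"
    unfolding g_def using assms(1-3) by (auto intro: subspace_add subspace_scale)
  moreover have "g 0 = x" by (simp add: g_def)
  ultimately have "((f \<circ> g) has_derivative (D \<circ> (\<lambda>t. t *\<^sub>R v))) (at 0)"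
    if "(f has_derivative D) (at x within S)" for D
    using diff_chain_within[OF g] has_derivative_subset[OF that] by (simp, blast)
  then have "D1 \<circ> (\<lambda>t. t *\<^sub>R v) = D2 \<circ> (\<lambda>t. t *\<^sub>R v)"
    using assms(4,5) has_derivative_unique by blast
  then show ?thesis by (metis comp_apply scale_one)
qed

lemma has_derivative_vector_box:
  fixes hh :: "'k::finite \<Rightarrow> 'a::real_normed_vector \<Rightarrow> 'b::real_inner"
  assumes "\<And>i y. y \<in> S i \<Longrightarrow> (hh i has_derivative D i y) (at y within S i)"
    and "\<forall>i. x $ i \<in> S i"
  shows "((\<lambda>x. \<chi> i. hh i (x $ i)) has_derivative (\<lambda>v. \<chi> i. D i (x $ i) (v $ i)))
           (at x within {x. \<forall>i. x $ i \<in> S i})"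
proof (rule has_derivative_vec_lambda)
  fix i
  have nth: "((\<lambda>x. x $ i) has_derivative (\<lambda>v. v $ i)) (at x within {x. \<forall>i. x $ i \<in> S i})"
    by (rule bounded_linear.has_derivative[OF bounded_linear_vec_nth has_derivative_ident])
  have "(\<lambda>x. x $ i) ` {x. \<forall>i. x $ i \<in> S i} \<subseteq> S i"
    by auto
  then have "(hh i has_derivative D i (x $ i))
      (at (x $ i) within (\<lambda>x. x $ i) ` {x. \<forall>i. x $ i \<in> S i})"
    using assms by (blast intro: has_derivative_subset)
  then show "((\<lambda>x. hh i (x $ i)) has_derivative (\<lambda>v. D i (x $ i) (v $ i)))
      (at x within {x. \<forall>i. x $ i \<in> S i})"
    using diff_chain_within[OF nth] by (simp add: o_def)
qed

lemma Dh_vector_box: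
  fixes S :: "'k::finite \<Rightarrow> 'a::real_normed_vector set"
    and hh :: "'k \<Rightarrow> 'a \<Rightarrow> 'b::real_inner"
  defines "SE \<equiv> {x. \<forall>i. x $ i \<in> S i}" and "h \<equiv> \<lambda>x. \<chi> i. hh i (x $ i)"
  assumes "\<And>i. subspace (S i)"
    and "\<And>i y. y \<in> S i \<Longrightarrow> hh i differentiable (at y within S i)"
    and "x \<in> SE"
  shows "bounded_linear (Dh SE h x)"
    and "v \<in> SE \<Longrightarrow> Dh SE h x v = (\<chi> i. Dh (S i) (hh i) (x $ i) (v $ i))"
proof -
  have D: "(h has_derivative (\<lambda>v. \<chi> i. Dh (S i) (hh i) (x $ i) (v $ i))) (at x within SE)"
    unfolding SE_def h_def Dh_def
    by (rule has_derivative_vector_box) (use assms(4,5) in \<open>auto simp: SE_def frechet_derivative_works\<close>)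
  then have E: "(h has_derivative Dh SE h x) (at x within SE)"
    unfolding Dh_def frechet_derivative_works[symmetric] by (rule differentiableI)
  then show "bounded_linear (Dh SE h x)"
    by (rule has_derivative_bounded_linear)
  have "subspace SE"
    unfolding subspace_def SE_def using assms(3)
    by (auto intro: subspace_0 subspace_add subspace_scale)
  then show "v \<in> SE \<Longrightarrow> Dh SE h x v = (\<chi> i. Dh (S i) (hh i) (x $ i) (v $ i))"
    using has_derivative_within_subspace_unique[OF _ assms(5) _ E D] by blast
qed

definition adjoint_norm :: "'a::real_inner set \<Rightarrow> ('a \<Rightarrow> 'b::real_inner) \<Rightarrow> 'b \<Rightarrow> real" where
  "adjoint_norm S A u = Sup {\<bar>u \<bullet> A v\<bar> | v. v \<in> S \<and> norm v \<le> 1}"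

lemma sigma_min_eq_Inf_adjoint_norm:
  "sigma_min S T A = Inf {adjoint_norm S A u | u. u \<in> T \<and> norm u = 1}"
  by (simp add: sigma_min_def adjoint_norm_def)

lemma bdd_above_abs_inner_image_unit_ball:
  assumes "bounded_linear A"
  shows "bdd_above {\<bar>u \<bullet> A v\<bar> | v. v \<in> S \<and> norm v \<le> 1}"
proof -
  obtain K where K: "K > 0" "\<And>x. norm (A x) \<le> norm x * K"
    using bounded_linear.pos_bounded[OF assms] by blast
  have "\<bar>u \<bullet> A v\<bar> \<le> norm u * K" if "norm v \<le> 1" for v
  proof -
    have "\<bar>u \<bullet> A v\<bar> \<le> norm u * norm (A v)" by (rule Cauchy_Schwarz_ineq2)
    also have "\<dots> \<le> norm u * K"
      using K(2)[of v] that K(1) by (simp add: mult_left_mono mult_left_le_one_le order_trans)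
    finally show ?thesis .
  qed
  then show ?thesis by (auto simp: bdd_above_def)
qed

lemma abs_inner_le_adjoint_norm:
  assumes "bounded_linear A" and "v \<in> S" and "norm v \<le> 1"
  shows "\<bar>u \<bullet> A v\<bar> \<le> adjoint_norm S A u"
  unfolding adjoint_norm_def
  by (rule cSup_upper) (use assms bdd_above_abs_inner_image_unit_ball in auto)

lemma sigma_min_le_adjoint_norm:
  assumes "bounded_linear A" and "0 \<in> S" and "u \<in> T" and "norm u = 1"
  shows "sigma_min S T A \<le> adjoint_norm S A u"
proof -
  have "0 \<le> adjoint_norm S A u" for u
    using abs_inner_le_adjoint_norm[OF assms(1,2)] by (simp add: linear_simps(3)[OF assms(1)])
  then show ?thesis
    unfolding sigma_min_eq_Inf_adjoint_norm
    by (intro cInf_lower) (use assms(3,4) in \<open>auto intro: bdd_belowI[where m=0]\<close>)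
qed

lemma inner_gt_of_less_adjoint_norm:
  assumes "subspace S" and "linear A" and "c < adjoint_norm S A u"
  obtains w where "w \<in> S" and "norm w \<le> 1" and "c < u \<bullet> A w"
proof -
  have "\<bar>u \<bullet> A 0\<bar> \<in> {\<bar>u \<bullet> A v\<bar> | v. v \<in> S \<and> norm v \<le> 1}"
    using subspace_0[OF assms(1)] by auto
  then obtain z where "z \<in> {\<bar>u \<bullet> A v\<bar> | v. v \<in> S \<and> norm v \<le> 1}" and "c < z"
    using less_cSupD[OF _ assms(3)[unfolded adjoint_norm_def]] by blast
  then obtain w where w: "w \<in> S" "norm w \<le> 1" "c < \<bar>u \<bullet> A w\<bar>"
    by blast
  show ?thesis
  proof (cases "0 \<le> u \<bullet> A w")
    case True
    with w show ?thesis by (intro that[of w]) auto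
  next
    case False
    have "u \<bullet> A (- w) = - (u \<bullet> A w)"
      by (simp add: linear_neg[OF assms(2)])
    with w False show ?thesis
      by (intro that[of "- w"] subspace_neg[OF assms(1)]) auto
  qed
qed

lemma le_adjoint_norm_approx:
  assumes "bounded_linear A"
    and "\<And>e. e > 0 \<Longrightarrow> \<exists>w\<in>S. norm w \<le> 1 \<and> c - e \<le> u \<bullet> A w"
  shows "c \<le> adjoint_norm S A u"
proof (rule field_le_epsilon)
  fix e :: real
  assume "e > 0"
  then obtain w where "w \<in> S" "norm w \<le> 1" "c - e \<le> u \<bullet> A w"
    using assms(2) by blast
  then have "c - e \<le> adjoint_norm S A u"
    using abs_inner_le_adjoint_norm[OF assms(1)] by (meson abs_ge_self order_trans)
  then show "c \<le> adjoint_norm S A u + e" by simp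
qed

lemma inner_ge_of_le_sigma_min:
  assumes "subspace S" and "subspace T" and "bounded_linear A"
    and "u \<in> T" and "s \<le> sigma_min S T A" and "e > 0"
  obtains w where "w \<in> S" and "norm w \<le> 1" and "norm u * (s - e) \<le> u \<bullet> A w"
proof (cases "u = 0")
  case True
  then show ?thesis using that subspace_0[OF assms(1)] by fastforce
next
  case False
  define u' where "u' = u /\<^sub>R norm u"
  have "u' \<in> T" and "norm u' = 1"
    unfolding u'_def using assms(2,4) False by (auto intro: subspace_scale)
  then have "s - e < adjoint_norm S A u'"
    using sigma_min_le_adjoint_norm[OF assms(3) subspace_0[OF assms(1)]] assms(5,6) by force
  then obtain w where w: "w \<in> S" "norm w \<le> 1" "s - e < u' \<bullet> A w"
    using inner_gt_of_less_adjoint_norm assms(1,3) bounded_linear.linear by blast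
  have "norm u * (s - e) \<le> norm u * (u' \<bullet> A w)"
    using w(3) by (simp add: mult_left_mono)
  also have "\<dots> = u \<bullet> A w"
    unfolding u'_def using False by simp
  finally show ?thesis using that w by blast
qed

lemma exists_unit_vector_box:
  fixes T :: "'k::finite \<Rightarrow> 'b::real_inner set"
  assumes "\<And>i. subspace (T i)" and "\<And>i. T i \<noteq> {0}"
  shows "\<exists>u. (\<forall>i. u $ i \<in> T i) \<and> norm u = 1"
proof -
  fix i0 :: 'k
  obtain t where t: "t \<in> T i0" "t \<noteq> 0"
    using assms subspace_0 by blast
  have "\<forall>i. axis i0 (t /\<^sub>R norm t) $ i \<in> T i"
    unfolding axis_def using t assms(1) by (auto intro: subspace_0 subspace_scale)
  moreover have "norm (axis i0 (t /\<^sub>R norm t) :: 'b ^ 'k) = 1"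
    using t by (simp add: norm_axis)
  ultimately show ?thesis by blast
qed

lemma le_adjoint_norm_block_diagonal:
  fixes S :: "'k::finite \<Rightarrow> 'a::real_inner set" and T :: "'k \<Rightarrow> 'b::real_inner set"
  assumes "\<And>i. subspace (S i)" and "\<And>i. subspace (T i)" and "\<And>i. bounded_linear (A i)"
    and "bounded_linear B" and "\<And>v. \<forall>i. v $ i \<in> S i \<Longrightarrow> B v = (\<chi> i. A i (v $ i))"
    and "\<And>i. s \<le> sigma_min (S i) (T i) (A i)"
    and "\<forall>i. u $ i \<in> T i" and "norm u = 1"
  shows "s \<le> adjoint_norm {v. \<forall>i. v $ i \<in> S i} B u"
proof (rule le_adjoint_norm_approx[OF assms(4)])
  fix e :: real
  assume "e > 0"
  have "\<exists>w. w \<in> S i \<and> norm w \<le> 1 \<and> norm (u $ i) * (s - e) \<le> u $ i \<bullet> A i w" for i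
    using inner_ge_of_le_sigma_min[OF assms(1-3) _ assms(6) \<open>e > 0\<close>] assms(7) by blast
  then obtain w where w: "\<And>i. w i \<in> S i" "\<And>i. norm (w i) \<le> 1"
    "\<And>i. norm (u $ i) * (s - e) \<le> u $ i \<bullet> A i (w i)"
    by metis
  define v where "v = (\<chi> i. norm (u $ i) *\<^sub>R w i)"
  have v_in: "\<forall>i. v $ i \<in> S i"
    unfolding v_def using w(1) assms(1) by (simp add: subspace_scale)
  have "(norm v)\<^sup>2 = (\<Sum>i\<in>UNIV. (norm (u $ i) * norm (w i))\<^sup>2)"
    unfolding norm_vec_power2 v_def by simp
  also have "\<dots> \<le> (\<Sum>i\<in>UNIV. (norm (u $ i))\<^sup>2)"
    using w(2) by (intro sum_mono power_mono) (auto simp: mult_left_le)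
  also have "\<dots> = 1"
    using assms(8) by (simp add: norm_vec_power2[symmetric])
  finally have "norm v \<le> 1"
    by (simp add: power_le_one_iff)
  have "s - e = (\<Sum>i\<in>UNIV. (norm (u $ i))\<^sup>2) * (s - e)"
    using assms(8) by (simp add: norm_vec_power2[symmetric])
  also have "\<dots> = (\<Sum>i\<in>UNIV. norm (u $ i) * (norm (u $ i) * (s - e)))"
    by (simp add: sum_distrib_right power2_eq_square mult.assoc)
  also have "\<dots> \<le> (\<Sum>i\<in>UNIV. norm (u $ i) * (u $ i \<bullet> A i (w i)))"
    using w(3) by (intro sum_mono mult_left_mono) auto
  also have "\<dots> = u \<bullet> B v"
    using assms(5)[OF v_in] assms(3)
    by (simp add: inner_vec_def v_def linear_simps(5) bounded_linear.linear)
  finally show "\<exists>w\<in>{v. \<forall>i. v $ i \<in> S i}. norm w \<le> 1 \<and> s - e \<le> u \<bullet> B w"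
    using v_in \<open>norm v \<le> 1\<close> by blast
qed

lemma le_sigma_min_block_diagonal:
  fixes S :: "'k::finite \<Rightarrow> 'a::real_inner set" and T :: "'k \<Rightarrow> 'b::real_inner set"
  assumes "\<And>i. subspace (S i)" and "\<And>i. subspace (T i)" and "\<And>i. T i \<noteq> {0}"
    and "\<And>i. bounded_linear (A i)"
    and "bounded_linear B" and "\<And>v. \<forall>i. v $ i \<in> S i \<Longrightarrow> B v = (\<chi> i. A i (v $ i))"
    and "\<And>i. s \<le> sigma_min (S i) (T i) (A i)"
  shows "s \<le> sigma_min {v. \<forall>i. v $ i \<in> S i} {u. \<forall>i. u $ i \<in> T i} B"
  unfolding sigma_min_eq_Inf_adjoint_norm
  using exists_unit_vector_box[of T, OF assms(2,3)] le_adjoint_norm_block_diagonal[OF assms(1,2,4-7)]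
  by (intro cInf_greatest) auto

lemma norm_nth_le_of_norm_le_Min:
  assumes "norm (y :: 'a::real_normed_vector ^ 'k::finite) \<le> (MIN i. R i)"
  shows "norm (y $ i) \<le> R i"
proof -
  have "norm (y $ i) \<le> norm y"
    by (rule Finite_Cartesian_Product.norm_nth_le)
  also have "\<dots> \<le> (MIN i. R i)"
    by (rule assms)
  also have "\<dots> \<le> R i"
    by simp
  finally show ?thesis .
qed

lemma A3_vector_box:
  fixes S :: "'k::finite \<Rightarrow> 'a::real_normed_vector set" and hh :: "'k \<Rightarrow> 'a \<Rightarrow> 'b::real_inner"
  assumes "\<And>i. subspace (S i)"
    and "\<And>i y. y \<in> S i \<Longrightarrow> hh i differentiable (at y within S i)"
    and "\<And>i. A3 (S i) (hh i) (R i) (C i)"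
  shows "A3 {x. \<forall>i. x $ i \<in> S i} (\<lambda>x. \<chi> i. hh i (x $ i)) (MIN i. R i) (MAX i. C i)"
  unfolding A3_def
proof (intro conjI ballI impI)
  have "C i \<le> (MAX i. C i)" for i by simp
  moreover have "C i > 0" for i using assms(3) unfolding A3_def by blast
  ultimately show "(MAX i. C i) > 0" by (meson less_le_trans)
next
  fix x v :: "'a ^ 'k"
  assume x: "x \<in> {x. \<forall>i. x $ i \<in> S i}" and v: "v \<in> {x. \<forall>i. x $ i \<in> S i}"
    and hx: "norm (\<chi> i. hh i (x $ i)) \<le> (MIN i. R i)"
  have "norm (hh i (x $ i + v $ i) - hh i (x $ i) - Dh (S i) (hh i) (x $ i) (v $ i))
      \<le> (MAX i. C i) * (norm (v $ i))\<^sup>2" for i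
  proof -
    have "norm (hh i (x $ i + v $ i) - hh i (x $ i) - Dh (S i) (hh i) (x $ i) (v $ i))
        \<le> C i * (norm (v $ i))\<^sup>2"
      using assms(3) x v norm_nth_le_of_norm_le_Min[OF hx, of i] unfolding A3_def by simp
    also have "\<dots> \<le> (MAX i. C i) * (norm (v $ i))\<^sup>2"
      by (simp add: mult_right_mono)
    finally show ?thesis .
  qed
  then show "norm ((\<chi> i. hh i ((x + v) $ i)) - (\<chi> i. hh i (x $ i))
      - Dh {x. \<forall>i. x $ i \<in> S i} (\<lambda>x. \<chi> i. hh i (x $ i)) x v) \<le> (MAX i. C i) * (norm v)\<^sup>2"
    using Dh_vector_box(2)[OF assms(1,2) x v] by (intro norm_vec_le_quadratic) simp
qed

lemma A2_vector_box:
  fixes S :: "'k::finite \<Rightarrow> 'a::euclidean_space set" and hh :: "'k \<Rightarrow> 'a \<Rightarrow> 'b::real_normed_vector"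
  assumes "\<And>i. closed (S i)" and "\<And>i. continuous_on (S i) (hh i)"
    and "\<And>i. A2 (S i) (hh i) (R i)"
  shows "A2 {x. \<forall>i. x $ i \<in> S i} (\<lambda>x. \<chi> i. hh i (x $ i)) (MIN i. R i)"
proof -
  let ?SE = "{x :: 'a ^ 'k. \<forall>i. x $ i \<in> S i}" and ?h = "\<lambda>x. \<chi> i. hh i (x $ i)"
  have "continuous_on ?SE ?h"
    by (intro continuous_on_vec_lambda continuous_on_compose2[OF assms(2)] continuous_intros) auto
  then have "closed (?SE \<inter> ?h -` K)" if "closed K" for K
    by (rule continuous_closed_preimage) (use assms(1) that in \<open>auto intro: closed_vector_box\<close>)
  then have closed_preimage: "closed {x \<in> ?SE. ?h x \<in> K}" if "closed K" for K
    using that by (simp add: vimage_def Int_def)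
  have "compact {x \<in> ?SE. ?h x = 0}"
  proof (rule compact_subset_vector_box)
    show "closed {x \<in> ?SE. ?h x = 0}"
      using closed_preimage[of "{0}"] by simp
    show "{x \<in> ?SE. ?h x = 0} \<subseteq> {x. \<forall>i. x $ i \<in> {y \<in> S i. hh i y = 0}}"
      by (auto simp: vec_eq_iff)
  qed (use assms(3) in \<open>simp add: A2_def\<close>)
  moreover have "compact {x \<in> ?SE. norm (?h x) \<le> (MIN i. R i)}"
  proof (rule compact_subset_vector_box)
    show "closed {x \<in> ?SE. norm (?h x) \<le> (MIN i. R i)}"
      using closed_preimage[of "cball 0 (MIN i. R i)"] by simp
    show "{x \<in> ?SE. norm (?h x) \<le> (MIN i. R i)}
        \<subseteq> {x. \<forall>i. x $ i \<in> {y \<in> S i. norm (hh i y) \<le> R i}}"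
      using norm_nth_le_of_norm_le_Min by fastforce
  qed (use assms(3) in \<open>simp add: A2_def\<close>)
  ultimately show ?thesis
    unfolding A2_def by blast
qed

lemma A1_vector_box:
  fixes S :: "'k::finite \<Rightarrow> 'a::real_inner set" and T :: "'k \<Rightarrow> 'b::real_inner set"
    and hh :: "'k \<Rightarrow> 'a \<Rightarrow> 'b"
  assumes "\<And>i. subspace (S i)" and "\<And>i. subspace (T i)" and "\<And>i. T i \<noteq> {0}"
    and "\<And>i y. y \<in> S i \<Longrightarrow> hh i differentiable (at y within S i)"
    and "\<And>i. A1 (S i) (T i) (hh i) (R i) (sig i)"
  shows "A1 {x. \<forall>i. x $ i \<in> S i} {y. \<forall>i. y $ i \<in> T i} (\<lambda>x. \<chi> i. hh i (x $ i))
      (MIN i. R i) (MIN i. sig i)"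
  unfolding A1_def
proof (intro conjI ballI impI)
  show "(MIN i. R i) > 0" and "(MIN i. sig i) > 0"
    using assms(5) unfolding A1_def by simp_all
next
  fix x :: "'a ^ 'k"
  assume x: "x \<in> {x. \<forall>i. x $ i \<in> S i}" and hx: "norm (\<chi> i. hh i (x $ i)) \<le> (MIN i. R i)"
  have "(MIN i. sig i) \<le> sig i" for i
    by simp
  moreover have "sig i \<le> sigma_min (S i) (T i) (Dh (S i) (hh i) (x $ i))" for i
    using assms(5)[of i] x norm_nth_le_of_norm_le_Min[OF hx, of i] unfolding A1_def by simp
  ultimately have sig_le: "(MIN i. sig i) \<le> sigma_min (S i) (T i) (Dh (S i) (hh i) (x $ i))" for i
    by (rule order_trans)
  have "(hh i has_derivative Dh (S i) (hh i) (x $ i)) (at (x $ i) within S i)" for i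
    using assms(4) x unfolding Dh_def frechet_derivative_works by simp
  then have "bounded_linear (Dh (S i) (hh i) (x $ i))" for i
    by (rule has_derivative_bounded_linear)
  moreover have "Dh {x. \<forall>i. x $ i \<in> S i} (\<lambda>x. \<chi> i. hh i (x $ i)) x v
      = (\<chi> i. Dh (S i) (hh i) (x $ i) (v $ i))" if "\<forall>i. v $ i \<in> S i" for v
    using Dh_vector_box(2)[OF assms(1,4) x] that by simp
  ultimately show "(MIN i. sig i) \<le> sigma_min {x. \<forall>i. x $ i \<in> S i} {y. \<forall>i. y $ i \<in> T i}
      (Dh {x. \<forall>i. x $ i \<in> S i} (\<lambda>x. \<chi> i. hh i (x $ i)) x)"
    using Dh_vector_box(1)[OF assms(1,4) x] sig_le
    by (intro le_sigma_min_block_diagonal[OF assms(1-3)])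
qed

lemma smooth_on_imp_differentiable:
  "smooth_on S f \<Longrightarrow> x \<in> S \<Longrightarrow> f differentiable (at x within S)"
  and smooth_on_imp_continuous_on: "smooth_on S f \<Longrightarrow> continuous_on S f"
  unfolding smooth_on_def by (metis ddir.simps(1) empty_set empty_subsetI)+

theorem mainTheorem1:
  fixes S :: "'k::finite \<Rightarrow> 'a::euclidean_space set"
    and T :: "'k \<Rightarrow> 'b::euclidean_space set"
    and hh :: "'k \<Rightarrow> 'a \<Rightarrow> 'b"
    and R sig C :: "'k \<Rightarrow> real"
  assumes "\<And>i. subspace (S i)"
    and "\<And>i. subspace (T i)"
    and "\<And>i. T i \<noteq> {0}"
    and "\<And>i. hh i ` S i \<subseteq> T i"
    and "\<And>i. smooth_on (S i) (hh i)"
    and "\<And>i. A1 (S i) (T i) (hh i) (R i) (sig i)"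
    and "\<And>i. A2 (S i) (hh i) (R i)"
    and "\<And>i. A3 (S i) (hh i) (R i) (C i)"
  defines "SE \<equiv> {x :: 'a ^ 'k. \<forall>i. x $ i \<in> S i}"
    and "TE \<equiv> {y :: 'b ^ 'k. \<forall>i. y $ i \<in> T i}"
    and "h \<equiv> (\<lambda>x :: 'a ^ 'k. \<chi> i. hh i (x $ i))"
  shows "A1 SE TE h (MIN i. R i) (MIN i. sig i)
       \<and> A2 SE h (MIN i. R i)
       \<and> A3 SE h (MIN i. R i) (MAX i. C i)"
proof -
  have diff: "\<And>i y. y \<in> S i \<Longrightarrow> hh i differentiable (at y within S i)"
    and cont: "\<And>i. continuous_on (S i) (hh i)"
    using assms(5) smooth_on_imp_differentiable smooth_on_imp_continuous_on by blast+
  show ?thesis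
    unfolding SE_def TE_def h_def
    using A1_vector_box[of S T hh R sig, OF assms(1-3) diff assms(6)]
      A2_vector_box[of S hh R, OF closed_subspace[OF assms(1)] cont assms(7)]
      A3_vector_box[of S hh R C, OF assms(1) diff assms(8)]
    by blast
qed

end
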